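(* The generating series $g(q;x)=\sum_\gamma q^{\omega_H(\gamma)+\omega_{DU}(\gamma)}x^{n(\gamma)}$, where $\gamma$ ranges over all Grand Schröder paths and $n(\gamma)$ is the semi-length, is $$g(q;x)=\frac{1}{\sqrt{1-2(1+2q)x+(1-2q)^2x^2}}.$$
   Context: Steps: $U=(1,1)$, $D=(1,-1)$, $H=(2,0)$. A Grand Schröder path of semi-length $n$ is any lattice path from $(0,0)$ to $(2n,0)$ with steps $U,D,H$. Paths are identified with words of steps; $\omega_H(\gamma)$ is the number of $H$ steps and $\omega_{DU}(\gamma)$ the number of occurrences of the factor $DU$ in $\gamma$. *)

theory Defs
  imports Complex_Main "HOL-Computational_Algebra.Formal_Power_Series"
begin

datatype step = U | D | H

fun step_dx :: "step \<Rightarrow> nat" where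
  "step_dx U = 1" | "step_dx D = 1" | "step_dx H = 2"

fun step_dy :: "step \<Rightarrow> int" where
  "step_dy U = 1" | "step_dy D = -1" | "step_dy H = 0"

definition path_dx :: "step list \<Rightarrow> nat" where
  "path_dx \<gamma> = (\<Sum>s\<leftarrow>\<gamma>. step_dx s)"

definition path_dy :: "step list \<Rightarrow> int" where
  "path_dy \<gamma> = (\<Sum>s\<leftarrow>\<gamma>. step_dy s)"

text \<open>Grand Schroeder path of semi-length n: from (0,0) to (2n,0), no positivity constraint.\<close>
definition grand_schroeder :: "nat \<Rightarrow> step list \<Rightarrow> bool" where
  "grand_schroeder n \<gamma> \<longleftrightarrow> path_dx \<gamma> = 2 * n \<and> path_dy \<gamma> = 0"

definition omega_H :: "step list \<Rightarrow> nat" where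
  "omega_H \<gamma> = count_list \<gamma> H"

definition omega_DU :: "step list \<Rightarrow> nat" where
  "omega_DU \<gamma> = card {i. Suc i < length \<gamma> \<and> \<gamma> ! i = D \<and> \<gamma> ! Suc i = U}"

definition gseries :: "real \<Rightarrow> real fps" where
  "gseries q = Abs_fps (\<lambda>n. \<Sum>\<gamma>\<in>{\<gamma>. grand_schroeder n \<gamma>}. q ^ (omega_H \<gamma> + omega_DU \<gamma>))"

end

theory Submission
  imports Defs "HOL-Computational_Algebra.Polynomial"
begin

(*
  Count a path by its numbers a = #U + #H of "rising units" and b = #D + #H of
  "falling units"; a Grand Schroeder path of semi-length n is exactly a word with
  a = b = n.  Let S(a,b) be the q-weighted sum over all words with given a and b.
  Splitting off the first letter (and remembering that a leading D followed by U
  creates a factor DU) gives the Pascal-like recursion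
      S(a+1,b+1) = S(a,b+1) + S(a+1,b) + (2q - 1) S(a,b),
  whose solution is S(a,b) = sum_k C(a,k) C(b,k) (2q)^k.  The diagonal values
  T_n = S(n,n) satisfy the three-term recurrence
      (n+2) T_{n+2} = (1+2q)(2n+3) T_{n+1} - (1-2q)^2 (n+1) T_n,
  a consequence of a quadratic identity between binomial coefficients.
  On the other side, G = 1/sqrt(P) with P = 1 - 2cx + ex^2 satisfies the ODE
  2 P G' + P' G = 0, which yields the same recurrence for the coefficients of G;
  with equal initial values both sequences coincide.
*)

section \<open>A quadratic identity for binomial coefficients\<close>

lemma real_binomial_shift_lower:
  "real (Suc k) * real (n choose Suc k) = real (n - k) * real (n choose k)"
proof -
  have "Suc k * (n choose Suc k) = (n - k) * (n choose k)"
    by (metis binomial_absorption binomial_absorb_comp)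
  then show ?thesis by (metis of_nat_mult)
qed

lemma real_binomial_shift_both:
  "real (Suc k) * real (Suc n choose Suc k) = real (Suc n) * real (n choose k)"
  by (metis Suc_times_binomial of_nat_mult)

text \<open>The coefficientwise form of the three-term recurrence for
  \<open>\<Sum>k. C(n,k)\<^sup>2 t\<^sup>k\<close> (coefficient of \<open>t\<^sup>i\<^sup>+\<^sup>2\<close>).  All six binomial coefficients are
  rational multiples of \<open>C(m,i)\<close>, after which the identity is a polynomial one.\<close>

lemma binomial_square_rec:
  fixes m i :: nat
  shows "real (m+2) * real (m+2 choose (i+2))^2 =
     real (2*m+3) * (real (m+1 choose (i+2))^2 + real (m+1 choose (i+1))^2)
     - real (m+1) * (real (m choose (i+2))^2 - 2 * real (m choose (i+1))^2 + real (m choose i)^2)"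
proof (cases "i \<le> m")
  case False
  then show ?thesis by (simp add: binomial_eq_0)
next
  case True
  then obtain d where md: "m = i + d" using le_Suc_ex by blast
  define w where "w = real (m choose i) / ((real i + 1) * (real i + 2))"
  have pos: "real i + 1 \<noteq> 0" "real i + 2 \<noteq> 0" by linarith+
  have b0: "real (m choose i) = (real i + 1) * (real i + 2) * w"
    using pos unfolding w_def by simp
  have b1: "real (m choose (i+1)) = real d * (real i + 2) * w"
  proof -
    have "(real i + 1) * real (m choose (i+1)) = (real i + 1) * (real d * (real i + 2) * w)"
      using real_binomial_shift_lower[of i m] b0 md by (simp add: algebra_simps)
    then show ?thesis using pos by simp
  qed
  have b2: "real (m choose (i+2)) = (real d - 1) * real d * w"
  proof -
    have "(real i + 2) * real (m choose (i+2)) = real (m - Suc i) * real (m choose (i+1))"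
      using real_binomial_shift_lower[of "Suc i" m] by (simp add: algebra_simps)
    also have "\<dots> = (real i + 2) * ((real d - 1) * real d * w)"
      unfolding b1 using md by (cases d) (auto simp: algebra_simps)
    finally show ?thesis using pos by simp
  qed
  have b3: "real (m+1 choose (i+1)) = (real m + 1) * (real i + 2) * w"
  proof -
    have "(real i + 1) * real (m+1 choose (i+1)) = (real i + 1) * ((real m + 1) * (real i + 2) * w)"
      using real_binomial_shift_both[of i m] b0 by (simp add: algebra_simps)
    then show ?thesis using pos by simp
  qed
  have b4: "real (m+1 choose (i+2)) = (real m + 1) * real d * w"
  proof -
    have "(real i + 2) * real (m+1 choose (i+2)) = (real i + 2) * ((real m + 1) * real d * w)"
      using real_binomial_shift_both[of "Suc i" m] b1 by (simp add: algebra_simps)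
    then show ?thesis using pos by simp
  qed
  have b5: "real (m+2 choose (i+2)) = (real m + 2) * (real m + 1) * w"
  proof -
    have "(real i + 2) * real (m+2 choose (i+2)) = (real m + 2) * real (m+1 choose (i+1))"
      using real_binomial_shift_both[of "Suc i" "Suc m"] by (simp del: binomial_Suc_Suc add: algebra_simps)
    also have "\<dots> = (real i + 2) * ((real m + 2) * (real m + 1) * w)"
      unfolding b3 by (simp add: algebra_simps)
    finally show ?thesis using pos by simp
  qed
  have polynomial_identity:
    "(x+y+2) * ((x+y+2)*(x+y+1)*z)^2 = (2*(x+y)+3) * (((x+y+1)*y*z)^2 + ((x+y+1)*(x+2)*z)^2)
       - (x+y+1) * (((y-1)*y*z)^2 - 2*(y*(x+2)*z)^2 + ((x+1)*(x+2)*z)^2)" for x y z :: real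
    by (simp add: algebra_simps power2_eq_square)
  show ?thesis
    unfolding b0 b1 b2 b3 b4 b5 using polynomial_identity[of "real i" "real d" w]
    by (simp add: md algebra_simps)
qed

section \<open>The polynomials \<open>\<Sum>k. C(a,k) C(b,k) t\<^sup>k\<close>\<close>

definition binom_poly :: "nat \<Rightarrow> nat \<Rightarrow> real poly" where
  "binom_poly a b = (\<Sum>k\<le>a. monom (real (a choose k) * real (b choose k)) k)"

lemma coeff_binom_poly: "coeff (binom_poly a b) k = real (a choose k) * real (b choose k)"
  unfolding binom_poly_def coeff_sum coeff_monom
  by (cases "k \<le> a") (auto simp: binomial_eq_0)

lemma binom_poly_0_left: "binom_poly 0 b = 1"
  by (rule poly_eqI) (simp add: coeff_binom_poly coeff_1)

lemma binom_poly_0_right: "binom_poly a 0 = 1"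
  by (rule poly_eqI) (simp add: coeff_binom_poly coeff_1)

text \<open>Pascal's rule in both arguments gives a two-dimensional Pascal recursion.\<close>

lemma binom_poly_Suc_Suc:
  "binom_poly (Suc a) (Suc b) =
     binom_poly a (Suc b) + binom_poly (Suc a) b + pCons 0 (binom_poly a b) - binom_poly a b"
  by (rule poly_eqI, case_tac n) (simp_all add: coeff_binom_poly algebra_simps)

lemma binom_poly_diag_rec:
  "smult (real m + 2) (binom_poly (m+2) (m+2)) =
     smult (2 * real m + 3) (pCons 1 1 * binom_poly (m+1) (m+1))
     - smult (real m + 1) ([:1, -1:]^2 * binom_poly m m)"
proof (rule poly_eqI)
  fix k
  have sq: "[:1, -1:]^2 * p = p - smult 2 (pCons 0 p) + pCons 0 (pCons 0 p)" for p :: "real poly"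
    by (simp add: power2_eq_square algebra_simps smult_add_left)
  show "coeff (smult (real m + 2) (binom_poly (m+2) (m+2))) k =
        coeff (smult (2 * real m + 3) (pCons 1 1 * binom_poly (m+1) (m+1))
               - smult (real m + 1) ([:1, -1:]^2 * binom_poly m m)) k"
  proof (cases k)
    case 0
    then show ?thesis unfolding sq by (simp add: coeff_binom_poly algebra_simps)
  next
    case (Suc j)
    show ?thesis
    proof (cases j)
      case 0
      then show ?thesis using Suc unfolding sq by (simp add: coeff_binom_poly algebra_simps power2_eq_square)
    next
      case (Suc i)
      then show ?thesis using binomial_square_rec[of m i] \<open>k = Suc j\<close> unfolding sq
        by (simp add: coeff_binom_poly power2_eq_square algebra_simps)
    qed
  qed
qed

lemma poly_binom_poly_diag_rec:
  "(real m + 2) * poly (binom_poly (m+2) (m+2)) t =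
     (1 + t) * (2 * real m + 3) * poly (binom_poly (m+1) (m+1)) t
     - (1 - t)^2 * (real m + 1) * poly (binom_poly m m) t"
  using arg_cong[OF binom_poly_diag_rec, of "\<lambda>p. poly p t"]
  by (simp add: algebra_simps power2_eq_square)

section \<open>Weighted words with prescribed rising and falling units\<close>

definition words :: "nat \<Rightarrow> nat \<Rightarrow> step list set" where
  "words a b = {w. count_list w U + count_list w H = a \<and> count_list w D + count_list w H = b}"

definition weight :: "real \<Rightarrow> step list \<Rightarrow> real" where
  "weight q w = q ^ (omega_H w + omega_DU w)"

definition weight_sum :: "real \<Rightarrow> nat \<Rightarrow> nat \<Rightarrow> real" where
  "weight_sum q a b = (\<Sum>w\<in>words a b. weight q w)"

lemma length_eq_counts: "length w = count_list w U + count_list w D + count_list w H"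
proof (induction w)
  case (Cons x w)
  then show ?case by (cases x) auto
qed simp

lemma finite_words: "finite (words a b)"
proof (rule finite_subset)
  have "x \<in> {U, D, H}" for x :: step
    by (cases x) auto
  then have "set w \<subseteq> {U, D, H}" for w
    by blast
  then show "words a b \<subseteq> {w. set w \<subseteq> {U, D, H} \<and> length w \<le> a + b}"
    unfolding words_def using length_eq_counts by fastforce
  show "finite {w. set w \<subseteq> {U, D, H} \<and> length w \<le> a + b}"
    by (rule finite_lists_length_le) simp
qed

lemma omega_H_Cons: "omega_H (x # w) = omega_H w + (if x = H then 1 else 0)"
  unfolding omega_H_def by simp

lemma omega_DU_Cons:
  "omega_DU (x # w) = omega_DU w + (if x = D \<and> w \<noteq> [] \<and> hd w = U then 1 else 0)"
proof -
  let ?A = "{i. Suc i < length w \<and> w ! i = D \<and> w ! Suc i = U}"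
  let ?Z = "if x = D \<and> w \<noteq> [] \<and> hd w = U then {0::nat} else {}"
  have split: "{i. Suc i < length (x#w) \<and> (x#w) ! i = D \<and> (x#w) ! Suc i = U} = ?Z \<union> Suc ` ?A"
  proof (rule set_eqI)
    fix i show "i \<in> {i. Suc i < length (x#w) \<and> (x#w) ! i = D \<and> (x#w) ! Suc i = U} \<longleftrightarrow> i \<in> ?Z \<union> Suc ` ?A"
      by (cases i; cases w) auto
  qed
  have "finite ?A" by (rule finite_subset[of _ "{..<length w}"]) auto
  then have "card (?Z \<union> Suc ` ?A) = card ?Z + card ?A"
    by (subst card_Un_disjoint) (auto simp: card_image)
  then show ?thesis unfolding omega_DU_def split by simp
qed

lemma weight_U: "weight q (U # w) = weight q w"
  and weight_H: "weight q (H # w) = q * weight q w"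
  and weight_D: "weight q (D # w) = (if w \<noteq> [] \<and> hd w = U then q else 1) * weight q w"
  unfolding weight_def by (simp_all add: omega_H_Cons omega_DU_Cons)

lemma Nil_words: "[] \<in> words a b \<longleftrightarrow> a = 0 \<and> b = 0"
  unfolding words_def by auto

lemma Cons_words: "x # w \<in> words a b \<longleftrightarrow>
   (case x of U \<Rightarrow> 0 < a \<and> w \<in> words (a - 1) b
            | D \<Rightarrow> 0 < b \<and> w \<in> words a (b - 1)
            | H \<Rightarrow> 0 < a \<and> 0 < b \<and> w \<in> words (a - 1) (b - 1))"
  unfolding words_def by (cases x) auto

lemma mem_Cons_image: "v \<in> Cons y ` A \<longleftrightarrow> v \<noteq> [] \<and> hd v = y \<and> tl v \<in> A"
  by (cases v) auto

lemma words_0_0: "words 0 0 = {[]}"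
  and words_Suc_0: "words (Suc a) 0 = Cons U ` words a 0"
  and words_0_Suc: "words 0 (Suc b) = Cons D ` words 0 b"
  and words_Suc_Suc: "words (Suc a) (Suc b) =
     Cons U ` words a (Suc b) \<union> Cons D ` words (Suc a) b \<union> Cons H ` words a b"
  by (rule set_eqI, case_tac x; auto simp: Nil_words Cons_words mem_Cons_image split: step.splits)+

lemma sum_Cons_image: "(\<Sum>w\<in>Cons x ` A. f w) = (\<Sum>w\<in>A. f (x # w))"
  by (subst sum.reindex) (auto simp: inj_on_def)

text \<open>Prefixing \<open>D\<close> multiplies the weight by \<open>q\<close> exactly on the words starting
  with \<open>U\<close>; these are the words \<open>U # v\<close>, and there are none without rising units.\<close>

lemma sum_weight_D_prefix:
  "(\<Sum>w\<in>words a b. weight q (D # w)) =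
     weight_sum q a b + (if a = 0 then 0 else (q - 1) * weight_sum q (a - 1) b)"
proof -
  let ?starts_U = "\<lambda>w. w \<noteq> [] \<and> hd w = U"
  have "(\<Sum>w\<in>words a b. weight q (D # w)) =
      (\<Sum>w\<in>words a b. weight q w + (if ?starts_U w then (q - 1) * weight q w else 0))"
    by (intro sum.cong refl) (simp add: weight_D algebra_simps)
  also have "\<dots> = weight_sum q a b + (\<Sum>w\<in>{w\<in>words a b. ?starts_U w}. (q - 1) * weight q w)"
    unfolding weight_sum_def sum.distrib by (simp add: sum.inter_filter finite_words)
  also have "{w\<in>words a b. ?starts_U w} = (if a = 0 then {} else Cons U ` words (a - 1) b)"
    by (auto simp: mem_Cons_image neq_Nil_conv Cons_words)
  finally show ?thesis
    by (simp add: sum_Cons_image weight_U weight_sum_def sum_distrib_left)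
qed

lemma weight_sum_0_0: "weight_sum q 0 0 = 1"
  by (simp add: weight_sum_def words_0_0 weight_def omega_H_def omega_DU_def)

lemma weight_sum_Suc_0: "weight_sum q (Suc a) 0 = weight_sum q a 0"
  by (simp add: weight_sum_def words_Suc_0 sum_Cons_image weight_U)

lemma weight_sum_0_Suc: "weight_sum q 0 (Suc b) = weight_sum q 0 b"
  using sum_weight_D_prefix[where a = 0] by (simp add: weight_sum_def words_0_Suc sum_Cons_image)

lemma weight_sum_Suc_Suc:
  "weight_sum q (Suc a) (Suc b) =
     weight_sum q a (Suc b) + weight_sum q (Suc a) b + (2 * q - 1) * weight_sum q a b"
proof -
  have "weight_sum q (Suc a) (Suc b) =
     (\<Sum>w\<in>words a (Suc b). weight q (U # w)) + (\<Sum>w\<in>words (Suc a) b. weight q (D # w))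
     + (\<Sum>w\<in>words a b. weight q (H # w))"
    unfolding weight_sum_def words_Suc_Suc
    by (simp add: sum.union_disjoint finite_words sum_Cons_image image_Un[symmetric]
        mem_Cons_image disjoint_iff)
  also have "\<dots> = weight_sum q a (Suc b) + (weight_sum q (Suc a) b + (q - 1) * weight_sum q a b)
      + q * weight_sum q a b"
    by (simp add: sum_weight_D_prefix weight_U weight_H weight_sum_def sum_distrib_left)
  finally show ?thesis by (simp add: algebra_simps)
qed

lemma weight_sum_binom_poly: "weight_sum q a b = poly (binom_poly a b) (2 * q)"
proof (induction a arbitrary: b)
  case 0
  show ?case
    by (induction b) (simp_all add: weight_sum_0_0 weight_sum_0_Suc binom_poly_0_left)
next
  case (Suc a)
  note IH = Suc.IH
  show ?case
  proof (induction b)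
    case 0
    then show ?case using IH[of 0] by (simp add: weight_sum_Suc_0 binom_poly_0_right)
  next
    case (Suc b)
    then show ?case using IH[of b] IH[of "Suc b"]
      by (simp add: weight_sum_Suc_Suc binom_poly_Suc_Suc algebra_simps)
  qed
qed

section \<open>Grand Schroeder paths are the words with equal rising and falling units\<close>

unbundle fps_syntax

lemma path_dx_counts: "path_dx w = count_list w U + count_list w D + 2 * count_list w H"
  unfolding path_dx_def
proof (induction w)
  case (Cons x w)
  then show ?case by (cases x) auto
qed simp

lemma path_dy_counts: "path_dy w = int (count_list w U) - int (count_list w D)"
  unfolding path_dy_def
proof (induction w)
  case (Cons x w)
  then show ?case by (cases x) auto
qed simp

lemma grand_schroeder_eq_words: "{\<gamma>. grand_schroeder n \<gamma>} = words n n"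
  unfolding grand_schroeder_def words_def path_dx_counts path_dy_counts by auto

lemma gseries_nth: "gseries q $ n = poly (binom_poly n n) (2 * q)"
  unfolding gseries_def grand_schroeder_eq_words
  by (simp add: weight_sum_binom_poly[symmetric] weight_sum_def weight_def)

section \<open>Coefficients of an inverse square root\<close>

lemma inverse_sqrt_ode:
  fixes R P :: "'a::field fps"
  assumes square: "R * R = P" and unit: "R $ 0 \<noteq> 0"
  shows "fps_const 2 * P * fps_deriv (inverse R) + fps_deriv P * inverse R = 0"
proof -
  let ?G = "inverse R"
  have "?G * R = 1" using unit by (rule inverse_mult_eq_1)
  then have "fps_deriv (?G * R) = 0" by simp
  then have deriv_zero: "fps_deriv ?G * R + ?G * fps_deriv R = 0"
    by (simp add: algebra_simps)
  have "fps_const 2 * P * fps_deriv ?G + fps_deriv P * ?G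
      = fps_const 2 * R * (fps_deriv ?G * R + ?G * fps_deriv R)"
    unfolding square[symmetric] by (simp add: algebra_simps mult_2 fps_numeral_fps_const[symmetric])
  then show ?thesis using deriv_zero by simp
qed

lemma quadratic_ode_coeff_rec:
  fixes G :: "'a::field_char_0 fps" and c e :: 'a
  defines "P \<equiv> 1 - fps_const (2 * c) * fps_X + fps_const e * fps_X ^ 2"
  assumes ode: "fps_const 2 * P * fps_deriv G + fps_deriv P * G = 0"
  shows "G $ 1 = c * G $ 0"
    and "(of_nat m + 2) * G $ (m + 2) =
           c * (2 * of_nat m + 3) * G $ (m + 1) - e * (of_nat m + 1) * G $ m"
proof -
  have P_mult: "(P * F) $ n = F $ n - (if n = 0 then 0 else 2 * c * F $ (n - 1))
      + (if n < 2 then 0 else e * F $ (n - 2))" for F n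
  proof -
    have "P * F = F - fps_const (2 * c) * (fps_X * F) + fps_const e * (fps_X ^ 2 * F)"
      unfolding P_def by (simp only: ring_distribs mult.assoc mult_1)
    then show ?thesis by (simp add: fps_X_power_mult_nth)
  qed
  have "fps_deriv P = fps_const (- 2 * c) + fps_const (2 * e) * fps_X"
    by (rule fps_ext) (simp add: P_def fps_deriv_def)
  then have P'_mult: "(fps_deriv P * F) $ n = - 2 * c * F $ n + (if n = 0 then 0 else 2 * e * F $ (n - 1))"
    for F n
    by (simp only: ring_distribs mult.assoc) simp
  have coeff: "(fps_const 2 * P * fps_deriv G + fps_deriv P * G) $ n =
      2 * (P * fps_deriv G) $ n + (fps_deriv P * G) $ n" for n
    by (simp only: fps_add_nth mult.assoc fps_mult_left_const_nth)
  have coeff0: "(fps_const 2 * P * fps_deriv G + fps_deriv P * G) $ 0 = 2 * G $ 1 - 2 * c * G $ 0"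
    unfolding coeff P_mult P'_mult by simp
  have coeffSuc: "(fps_const 2 * P * fps_deriv G + fps_deriv P * G) $ Suc m =
      2 * ((of_nat m + 2) * G $ (m + 2)) - 4 * c * ((of_nat m + 1) * G $ (m + 1))
      + 2 * e * (of_nat m * G $ m) - 2 * c * G $ (m + 1) + 2 * e * G $ m"
    unfolding coeff P_mult P'_mult by (cases m) (simp_all add: algebra_simps)
  show "G $ 1 = c * G $ 0"
    using coeff0 unfolding ode by simp
  show "(of_nat m + 2) * G $ (m + 2) =
           c * (2 * of_nat m + 3) * G $ (m + 1) - e * (of_nat m + 1) * G $ m"
  proof -
    have "2 * ((of_nat m + 2) * G $ (m + 2)
        - (c * (2 * of_nat m + 3) * G $ (m + 1) - e * (of_nat m + 1) * G $ m)) = 0"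
      using coeffSuc unfolding ode by (simp add: algebra_simps)
    then show ?thesis
      by (metis mult_eq_0_iff zero_neq_numeral eq_iff_diff_eq_0)
  qed
qed

lemma three_term_rec_unique:
  fixes f g :: "nat \<Rightarrow> 'a::field_char_0"
  assumes "f 0 = g 0" "f 1 = g 1"
    and f_rec: "\<And>m. (of_nat m + 2) * f (m + 2) = A m * f (m + 1) + B m * f m"
    and g_rec: "\<And>m. (of_nat m + 2) * g (m + 2) = A m * g (m + 1) + B m * g m"
  shows "f = g"
proof -
  have "f n = g n \<and> f (n + 1) = g (n + 1)" for n
  proof (induction n)
    case (Suc n)
    have "(of_nat n + 2) * f (n + 2) = (of_nat n + 2) * g (n + 2)"
      using f_rec[of n] g_rec[of n] Suc by simp
    moreover have "(of_nat n + 2 :: 'a) \<noteq> 0"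
      using of_nat_neq_0[of "Suc n", where 'a = 'a] by (simp add: add.commute)
    ultimately show ?case using Suc by simp
  qed (use assms in simp)
  then show ?thesis by auto
qed

lemma gseries_rec:
  "(real m + 2) * gseries q $ (m + 2) =
     (1 + 2 * q) * (2 * real m + 3) * gseries q $ (m + 1) - (1 - 2 * q)^2 * (real m + 1) * gseries q $ m"
  unfolding gseries_nth by (rule poly_binom_poly_diag_rec)

lemma gseries_0: "gseries q $ 0 = 1"
  by (simp add: gseries_nth binom_poly_0_right)

lemma gseries_1: "gseries q $ 1 = 1 + 2 * q"
proof -
  have "binom_poly 1 1 = [:1, 1:]"
    by (rule poly_eqI) (simp add: coeff_binom_poly coeff_pCons split: nat.split)
  then show ?thesis by (simp add: gseries_nth)
qed

theorem mainTheorem14: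
  fixes q :: real
  shows "gseries q = inverse (fps_radical (\<lambda>k a. root k a) 2
           (1 - fps_const (2 * (1 + 2 * q)) * fps_X + fps_const ((1 - 2 * q)^2) * fps_X ^ 2))"
proof -
  define c e where "c = 1 + 2 * q" and "e = (1 - 2 * q)^2"
  define P where "P = 1 - fps_const (2 * c) * fps_X + fps_const e * (fps_X ^ 2 :: real fps)"
  define R where "R = fps_radical (\<lambda>k a. root k a) 2 P"
  have R0: "R $ 0 = 1" unfolding R_def P_def by simp
  have "R ^ 2 = P"
    using power_radical[of P "\<lambda>k a. root k a" 1] unfolding R_def P_def by (simp add: numeral_2_eq_2)
  then have "fps_const 2 * P * fps_deriv (inverse R) + fps_deriv P * inverse R = 0"
    using R0 by (intro inverse_sqrt_ode) (simp_all add: power2_eq_square)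
  note G_rec = quadratic_ode_coeff_rec[OF this[unfolded P_def]]
  have "($) (inverse R) = ($) (gseries q)"
  proof (rule three_term_rec_unique)
    show "inverse R $ 0 = gseries q $ 0"
      using R0 by (simp add: gseries_0)
    have "inverse R $ 1 = c"
      using G_rec(1) R0 by simp
    then show "inverse R $ 1 = gseries q $ 1"
      unfolding gseries_1 c_def .
    show "(real m + 2) * inverse R $ (m + 2) =
        c * (2 * real m + 3) * inverse R $ (m + 1) + (- e * (real m + 1)) * inverse R $ m" for m
      using G_rec(2)[of m] by simp
    show "(real m + 2) * gseries q $ (m + 2) =
        c * (2 * real m + 3) * gseries q $ (m + 1) + (- e * (real m + 1)) * gseries q $ m" for m
      using gseries_rec[of m q] by (simp add: c_def e_def)
  qed
  then show ?thesis unfolding R_def P_def c_def e_def by (simp add: fps_eq_iff)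
qed

end
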